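(* Fix $0<\delta<1$ and let $\epsilon=\frac12+\frac\delta2$, $\epsilon'=\frac12$, $c=\frac8\delta$. Then for even $n$, $|\mathcal G_n|\ge 2^{\Omega(n^{2-\epsilon}\log n)}$.
   Context: For even $n$, a good graph on $n$ vertices is a bipartite graph with vertex set $[n]$ and parts $\{1,\dots,\frac n2\}$ and $\{\frac n2+1,\dots,n\}$, having exactly $\lfloor(\frac n2)^{2-\epsilon}\rfloor$ edges, such that every induced subgraph with at most $(\frac n2)^{\epsilon'}$ vertices has a vertex of degree less than $c$ (within that subgraph). $\mathcal G_n$ denotes the set of good graphs on $n$ vertices. *)

theory Defs
  imports Complex_Main
begin

text \<open>A bipartite graph on vertex set [n] with parts {1..n/2} and {n/2+1..n} is
represented by its edge set E, a set of pairs (u,v) with u in the left part and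
v in the right part.\<close>

definition bip_degree_in :: "(nat \<times> nat) set \<Rightarrow> nat set \<Rightarrow> nat \<Rightarrow> nat" where
  "bip_degree_in E S v = card {w \<in> S. (v, w) \<in> E \<or> (w, v) \<in> E}"

definition good_graph :: "real \<Rightarrow> real \<Rightarrow> real \<Rightarrow> nat \<Rightarrow> (nat \<times> nat) set \<Rightarrow> bool" where
  "good_graph \<epsilon> \<epsilon>' c n E \<longleftrightarrow>
     E \<subseteq> {1..n div 2} \<times> {n div 2 + 1..n} \<and>
     card E = nat \<lfloor>real (n div 2) powr (2 - \<epsilon>)\<rfloor> \<and>
     (\<forall>S. S \<subseteq> {1..n} \<and> S \<noteq> {} \<and> real (card S) \<le> real (n div 2) powr \<epsilon>' \<longrightarrow>
        (\<exists>v\<in>S. real (bip_degree_in E S v) < c))"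

definition good_graphs :: "real \<Rightarrow> real \<Rightarrow> real \<Rightarrow> nat \<Rightarrow> (nat \<times> nat) set set" where
  "good_graphs \<epsilon> \<epsilon>' c n = {E. good_graph \<epsilon> \<epsilon>' c n E}"

end

theory Submission
  imports Defs
begin

(* With k = n/2 and m = floor (k^(3/2 - delta/2)), count the m-edge subsets of K(k,k) that are
   not good. A set S of s <= sqrt k vertices in which every vertex has degree at least c = 8/delta
   spans t = ceil (c s/2) edges, so a bad edge set contains t edges inside some S x S. A union bound
   over S and over these t edges bounds the proportion of bad edge sets by
     sum_s (2k choose s) (s^2 choose t) (m/k^2)^t  <=  sum_s (2/k)^s  <=  1/3,
   using (N choose t) <= (e N/t)^t. Hence at least 2/3 of the (k^2 choose m) >= (k^2/m)^m >= k^(m/2)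
   edge sets are good. *)

lemma power_le_exp_mult_fact:
  fixes x :: real
  assumes "0 \<le> x"
  shows "x ^ t \<le> exp x * fact t"
proof -
  have "summable (\<lambda>n. x ^ n /\<^sub>R fact n)"
    using exp_converges sums_summable by blast
  then have "sum (\<lambda>n. x ^ n /\<^sub>R fact n) {t} \<le> suminf (\<lambda>n. x ^ n /\<^sub>R fact n)"
    by (rule sum_le_suminf) (use assms in auto)
  then have "x ^ t / fact t \<le> exp x"
    by (simp add: exp_def divide_inverse mult.commute)
  then show ?thesis
    by (simp add: divide_le_eq mult.commute)
qed

lemma binomial_le_exp_mult_pow:
  assumes "0 < t"
  shows "real (n choose t) \<le> (exp 1 * real n / real t) ^ t"
proof -
  have "real (n choose t) * fact t \<le> real n ^ t"
    using binomial_fact_pow[of n t] by (metis of_nat_fact of_nat_le_iff of_nat_mult of_nat_power)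
  moreover have "real t ^ t \<le> exp 1 ^ t * fact t"
    using power_le_exp_mult_fact[of "real t" t] by (simp add: exp_of_nat_mult[symmetric])
  ultimately have "real (n choose t) * fact t * real t ^ t \<le> real n ^ t * (exp 1 ^ t * fact t)"
    by (intro mult_mono) auto
  then have "real (n choose t) * real t ^ t \<le> (exp 1 * real n) ^ t"
    by (simp add: power_mult_distrib mult_ac)
  then show ?thesis
    using assms by (simp add: power_divide field_simps)
qed

lemma binomial_diff_le_ratio_pow:
  fixes K m t :: nat
  assumes "t \<le> m" "m \<le> K"
  shows "real ((K - t) choose (m - t)) \<le> (real m / real K) ^ t * real (K choose m)"
  using assms(1)
proof (induction t)
  case 0
  then show ?case by simp
next
  case (Suc t)
  define a where "a = K - Suc t"
  define b where "b = m - Suc t"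
  have a: "Suc a = K - t" and b: "Suc b = m - t"
    using Suc.prems assms unfolding a_def b_def by auto
  have Kt: "real (K - t) > 0"
    using Suc.prems assms by auto
  have "real (K - t) * real (a choose b) = real ((K - t) choose (m - t)) * real (m - t)"
    using Suc_times_binomial_eq[of a b] unfolding a b by (metis of_nat_mult)
  then have "real (a choose b) = real ((K - t) choose (m - t)) * (real (m - t) / real (K - t))"
    using Kt by (simp add: field_simps)
  also have "\<dots> \<le> real ((K - t) choose (m - t)) * (real m / real K)"
  proof (rule mult_left_mono)
    have "real (m - t) * real K \<le> real m * real (K - t)"
      using Suc.prems assms mult_right_mono[of "real m" "real K" "real t"]
      by (simp add: of_nat_diff algebra_simps)
    then show "real (m - t) / real (K - t) \<le> real m / real K"
      using Kt by (simp add: divide_simps)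
  qed simp
  also have "\<dots> \<le> (real m / real K) ^ t * real (K choose m) * (real m / real K)"
    using Suc by (intro mult_right_mono) auto
  finally show ?case
    by (simp add: a_def b_def mult_ac)
qed

lemma card_supersets_le:
  assumes "finite U" "T \<subseteq> U" "card T = t" "m \<le> card U"
  shows "real (card {E. E \<subseteq> U \<and> card E = m \<and> T \<subseteq> E})
           \<le> (real m / real (card U)) ^ t * real (card U choose m)"
proof (cases "t \<le> m")
  case True
  have "finite T"
    using assms finite_subset by blast
  have "inj_on (\<lambda>E. E - T) {E. E \<subseteq> U \<and> card E = m \<and> T \<subseteq> E}"
    by (auto simp: inj_on_def)
  moreover have "(\<lambda>E. E - T) ` {E. E \<subseteq> U \<and> card E = m \<and> T \<subseteq> E} \<subseteq> {B. B \<subseteq> U - T \<and> card B = m - t}"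
    using assms by (auto simp: card_Diff_subset dest: finite_subset)
  ultimately have "card {E. E \<subseteq> U \<and> card E = m \<and> T \<subseteq> E} \<le> card {B. B \<subseteq> U - T \<and> card B = m - t}"
    using assms by (intro card_inj_on_le) auto
  also have "\<dots> = (card U - t) choose (m - t)"
    using n_subsets[of "U - T" "m - t"] assms \<open>finite T\<close> by (simp add: card_Diff_subset)
  finally show ?thesis
    using binomial_diff_le_ratio_pow[OF True assms(4)] by (meson of_nat_le_iff order_trans)
next
  case False
  have no_supersets: "{E. E \<subseteq> U \<and> card E = m \<and> T \<subseteq> E} = {}"
    using False assms by (auto dest: card_mono[OF finite_subset])
  show ?thesis
    unfolding no_supersets by simp
qed

lemma sum_bip_degree_in_le:
  assumes "finite S"
  shows "(\<Sum>v\<in>S. bip_degree_in E S v) \<le> 2 * card (E \<inter> (S \<times> S))"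
proof -
  have "(\<Sum>v\<in>S. bip_degree_in E S v)
          \<le> (\<Sum>v\<in>S. card {w\<in>S. (v, w) \<in> E} + card {w\<in>S. (w, v) \<in> E})"
  proof (rule sum_mono)
    fix v
    have neighbours: "{w \<in> S. (v, w) \<in> E \<or> (w, v) \<in> E} = {w\<in>S. (v, w) \<in> E} \<union> {w\<in>S. (w, v) \<in> E}"
      by auto
    show "bip_degree_in E S v \<le> card {w\<in>S. (v, w) \<in> E} + card {w\<in>S. (w, v) \<in> E}"
      unfolding bip_degree_in_def neighbours by (rule card_Un_le)
  qed
  also have "\<dots> = (\<Sum>v\<in>S. card {w\<in>S. (v, w) \<in> E}) + (\<Sum>v\<in>S. card {w\<in>S. (w, v) \<in> E})"
    by (simp add: sum.distrib)
  also have "(\<Sum>v\<in>S. card {w\<in>S. (v, w) \<in> E}) = card (E \<inter> (S \<times> S))"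
  proof -
    have "Sigma S (\<lambda>v. {w\<in>S. (v, w) \<in> E}) = E \<inter> (S \<times> S)"
      by auto
    then show ?thesis
      using card_SigmaI[of S "\<lambda>v. {w\<in>S. (v, w) \<in> E}"] assms by simp
  qed
  also have "(\<Sum>v\<in>S. card {w\<in>S. (w, v) \<in> E}) = card (E \<inter> (S \<times> S))"
  proof -
    have "Sigma S (\<lambda>v. {w\<in>S. (w, v) \<in> E}) = prod.swap ` (E \<inter> (S \<times> S))"
      by auto
    then show ?thesis
      using card_SigmaI[of S "\<lambda>v. {w\<in>S. (w, v) \<in> E}"] assms by (simp add: card_image)
  qed
  finally show ?thesis
    by simp
qed

lemma card_edges_in_dense_set_ge:
  assumes "finite S" "\<forall>v\<in>S. c \<le> real (bip_degree_in E S v)"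
  shows "nat \<lceil>c * real (card S) / 2\<rceil> \<le> card (E \<inter> (S \<times> S))"
proof -
  have "c * real (card S) \<le> (\<Sum>v\<in>S. real (bip_degree_in E S v))"
    using sum_mono[of S "\<lambda>_. c"] assms(2) by (simp add: mult.commute)
  also have "\<dots> \<le> real (2 * card (E \<inter> (S \<times> S)))"
    using sum_bip_degree_in_le[OF assms(1), of E] by (metis of_nat_le_iff of_nat_sum)
  finally show ?thesis
    by (simp add: nat_ceiling_le_eq)
qed

lemma card_graphs_with_dense_set_le:
  fixes c :: real and s :: nat
  assumes "finite V" "finite U" "m \<le> card U"
  defines "t \<equiv> nat \<lceil>c * real s / 2\<rceil>"
  shows "real (card {E. E \<subseteq> U \<and> card E = m \<and>
                    (\<exists>S\<subseteq>V. card S = s \<and> (\<forall>v\<in>S. c \<le> real (bip_degree_in E S v)))})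
           \<le> real (card V choose s) * real ((s * s) choose t)
              * ((real m / real (card U)) ^ t * real (card U choose m))"
    (is "real (card ?B) \<le> _ * _ * ?X")
proof -
  define Ss where "Ss = {S. S \<subseteq> V \<and> card S = s}"
  define Ts where "Ts S = {T. T \<subseteq> U \<inter> (S \<times> S) \<and> card T = t}" for S
  define Sup where "Sup T = {E. E \<subseteq> U \<and> card E = m \<and> T \<subseteq> E}" for T
  have cover: "?B \<subseteq> (\<Union>S\<in>Ss. \<Union>T\<in>Ts S. Sup T)"
  proof
    fix E assume "E \<in> ?B"
    then obtain S where E: "E \<subseteq> U" "card E = m" and S: "S \<subseteq> V" "card S = s"
      and dense: "\<forall>v\<in>S. c \<le> real (bip_degree_in E S v)"
      by blast
    have "t \<le> card (E \<inter> (S \<times> S))"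
      using card_edges_in_dense_set_ge[OF finite_subset[OF S(1) assms(1)] dense] S unfolding t_def by simp
    then obtain T where "T \<subseteq> E \<inter> (S \<times> S)" "card T = t"
      by (meson obtain_subset_with_card_n)
    then show "E \<in> (\<Union>S\<in>Ss. \<Union>T\<in>Ts S. Sup T)"
      using E S unfolding Ss_def Ts_def Sup_def by blast
  qed
  have fin_Ss: "finite Ss"
    unfolding Ss_def using assms(1) by (auto intro: finite_subset[of _ "Pow V"])
  have fin_Ts: "finite (Ts S)" for S
    unfolding Ts_def using assms(2) by (auto intro: finite_subset[of _ "Pow U"])
  have card_Ts: "real (card (Ts S)) \<le> real ((s * s) choose t)" if "S \<in> Ss" for S
  proof -
    have S: "finite (S \<times> S)" "card (S \<times> S) = s * s"
      using that assms(1) unfolding Ss_def by (auto simp: card_cartesian_product intro: finite_subset)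
    have "card (Ts S) \<le> card {T. T \<subseteq> S \<times> S \<and> card T = t}"
      unfolding Ts_def using S by (intro card_mono) (auto intro: finite_subset[of _ "Pow (S \<times> S)"])
    then show ?thesis
      using n_subsets[OF S(1)] S(2) by simp
  qed
  have card_Sup: "real (card (Sup T)) \<le> ?X" if "T \<in> Ts S" for S T
    using card_supersets_le[OF assms(2) _ _ assms(3)] that unfolding Ts_def Sup_def by auto
  have "(\<Union>S\<in>Ss. \<Union>T\<in>Ts S. Sup T) \<subseteq> Pow U"
    unfolding Sup_def by blast
  then have "card ?B \<le> card (\<Union>S\<in>Ss. \<Union>T\<in>Ts S. Sup T)"
    using cover assms(2) by (meson card_mono finite_Pow_iff finite_subset)
  also have "\<dots> \<le> (\<Sum>S\<in>Ss. \<Sum>T\<in>Ts S. card (Sup T))"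
    by (intro order_trans[OF card_UN_le[OF fin_Ss]] sum_mono card_UN_le fin_Ts)
  finally have "real (card ?B) \<le> (\<Sum>S\<in>Ss. \<Sum>T\<in>Ts S. real (card (Sup T)))"
    by (simp only: of_nat_le_iff flip: of_nat_sum)
  also have "\<dots> \<le> (\<Sum>S\<in>Ss. real (card (Ts S)) * ?X)"
    using card_Sup by (intro sum_mono) (simp add: sum_bounded_above)
  also have "\<dots> \<le> (\<Sum>S\<in>Ss. real ((s * s) choose t) * ?X)"
    using card_Ts by (intro sum_mono mult_right_mono) auto
  also have "\<dots> = real (card V choose s) * real ((s * s) choose t) * ?X"
    using n_subsets[OF assms(1)] unfolding Ss_def by simp
  finally show ?thesis .
qed

lemma edge_ratio_le:
  fixes \<delta> :: real and k s m t :: nat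
  assumes "0 < \<delta>" "\<delta> < 1" "8 \<le> k" "1 \<le> s" "real s \<le> sqrt (real k)"
    and "real m \<le> real k powr (2 - (1/2 + \<delta>/2))" and "4 * real s / \<delta> \<le> real t"
  shows "exp 1 * real (s * s) / real t * (real m / real (k * k)) \<le> real k powr (- \<delta> / 2)"
proof -
  have "0 < 4 * real s / \<delta>"
    using assms by simp
  then have k: "real k \<ge> 8" and t: "0 < real t"
    using assms by linarith+
  have "exp 1 * real (s * s) / real t * (real m / real (k * k))
          = real s * real s * real m * exp 1 / (real t * real (k * k))"
    by simp
  also have "\<dots> \<le> real s * real s * real m * exp 1 / (4 * real s / \<delta> * real (k * k))"
    using assms k t by (intro divide_left_mono mult_right_mono mult_pos_pos) auto
  also have "\<dots> = real s * real m / real (k * k) * (exp 1 * \<delta> / 4)"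
    using assms by (simp add: field_simps)
  also have "\<dots> \<le> real s * real m / real (k * k)"
  proof -
    have "exp 1 * \<delta> \<le> 3 * 1"
      using exp_le assms by (intro mult_mono) auto
    then show ?thesis
      by (intro mult_left_le) auto
  qed
  also have "\<dots> \<le> real k powr (1/2) * real k powr (2 - (1/2 + \<delta>/2)) / real k powr 2"
  proof -
    have "real s * real m \<le> real k powr (1/2) * real k powr (2 - (1/2 + \<delta>/2))"
      using assms k by (intro mult_mono) (auto simp: powr_half_sqrt)
    moreover have "real (k * k) = real k powr 2"
      using k by (simp add: powr_realpow power2_eq_square)
    ultimately show ?thesis
      using k by (simp add: divide_right_mono)
  qed
  also have "\<dots> = real k powr (1/2 + (2 - (1/2 + \<delta>/2)) - 2)"
    by (simp only: powr_add powr_diff)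
  finally show ?thesis
    by simp
qed

lemma dense_set_count_factor_le:
  fixes \<delta> :: real and k s m :: nat
  assumes "0 < \<delta>" "\<delta> < 1" "8 \<le> k" "1 \<le> s" "real s \<le> sqrt (real k)"
    and "real m \<le> real k powr (2 - (1/2 + \<delta>/2))"
  defines "t \<equiv> nat \<lceil>8 / \<delta> * real s / 2\<rceil>"
  shows "real ((2 * k) choose s) * real ((s * s) choose t) * (real m / real (k * k)) ^ t
           \<le> (2 / real k) ^ s"
proof -
  have k: "real k \<ge> 8"
    using assms by simp
  have t: "4 * real s / \<delta> \<le> real t"
    unfolding t_def using assms by (simp add: field_simps)
  moreover have "0 < 4 * real s / \<delta>"
    using assms by simp
  ultimately have "0 < t"
    by linarith
  define q where "q = exp 1 * real (s * s) / real t * (real m / real (k * k))"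
  have q: "0 \<le> q" "q \<le> real k powr (- \<delta> / 2)"
    unfolding q_def using edge_ratio_le[OF assms(1-6) t] by auto
  have "real ((2 * k) choose s) \<le> real (2 * k) ^ s"
    using binomial_fact_pow[of "2 * k" s] fact_ge_1[of s, where 'a=nat]
    by (metis dual_order.trans mult_le_mono2 nat_mult_1_right of_nat_le_iff of_nat_power)
  moreover have "real ((s * s) choose t) * (real m / real (k * k)) ^ t \<le> q ^ t"
    using binomial_le_exp_mult_pow[OF \<open>0 < t\<close>, of "s * s"]
    unfolding q_def power_mult_distrib by (intro mult_right_mono) auto
  ultimately have "real ((2 * k) choose s) * real ((s * s) choose t) * (real m / real (k * k)) ^ t
                     \<le> real (2 * k) ^ s * q ^ t"
    unfolding mult.assoc using q by (intro mult_mono) auto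
  also have "\<dots> \<le> real (2 * k) ^ s * (real k powr (- \<delta> / 2)) ^ t"
    using q by (intro mult_left_mono power_mono) auto
  also have "\<dots> = real (2 * k) ^ s * real k powr (- \<delta> / 2 * real t)"
    using k by (simp add: powr_realpow[symmetric] powr_powr)
  also have "\<dots> \<le> real (2 * k) ^ s * real k powr (- 2 * real s)"
    \<comment> \<open>c = 8/\<delta> makes t \<ge> 4s/\<delta>, so the edge factor k^(-\<delta>t/2) beats the (2k)^s choices of S\<close>
  proof -
    have "\<delta> * (4 * real s / \<delta>) \<le> \<delta> * real t"
      using t \<open>0 < \<delta>\<close> by (intro mult_left_mono) auto
    then have "4 * real s \<le> \<delta> * real t"
      using \<open>0 < \<delta>\<close> by simp
    then show ?thesis
      using k by (intro mult_left_mono powr_mono) auto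
  qed
  also have "\<dots> = (2 / real k) ^ s"
  proof -
    have "real k powr (- 2 * real s) = 1 / real k ^ (2 * s)"
      using k by (simp add: powr_minus powr_realpow[symmetric] powr_powr divide_inverse mult.commute)
    then show ?thesis
      using k by (simp add: power_mult power_divide power_mult_distrib power2_eq_square field_simps)
  qed
  finally show ?thesis .
qed

lemma sum_power_atLeast1_le_one_third:
  fixes x :: real
  assumes "0 < x" "x \<le> 1/4"
  shows "(\<Sum>s\<in>{1..r}. x ^ s) \<le> 1/3"
proof -
  have "(\<Sum>s\<in>{1..r}. x ^ s) = x * (\<Sum>s<r. x ^ s)"
    by (induction r) (simp_all add: algebra_simps)
  also have "\<dots> \<le> x * (1 / (1 - x))"
    using geometric_sum_less[of x "{..<r}"] assms by (intro mult_left_mono) auto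
  also have "\<dots> \<le> 1/3"
    using assms by (simp add: field_simps)
  finally show ?thesis .
qed

lemma edge_count_bounds:
  fixes \<delta> :: real and k :: nat
  assumes "0 < \<delta>" "\<delta> < 1" "1 \<le> k"
  defines "m \<equiv> nat \<lfloor>real k powr (2 - (1/2 + \<delta>/2))\<rfloor>"
  shows "real k powr (2 - (1/2 + \<delta>/2)) - 1 \<le> real m" "real m \<le> real k powr (2 - (1/2 + \<delta>/2))"
    and "real k - 1 \<le> real m" "m \<le> k * k"
proof -
  define A where "A = real k powr (2 - (1/2 + \<delta>/2))"
  have A: "real k \<le> A" "A \<le> real k powr 2"
    unfolding A_def using assms powr_mono[of 1 "2 - (1/2 + \<delta>/2)" "real k"]
      powr_mono[of "2 - (1/2 + \<delta>/2)" 2 "real k"] by simp_all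
  show m: "A - 1 \<le> real m" "real m \<le> A"
    unfolding m_def using A assms floor_correct[of A]
    by (simp_all add: A_def of_nat_floor of_nat_nat)
  then show "real k - 1 \<le> real m"
    using A by linarith
  have "real m \<le> real (k * k)"
    using m A assms by (simp add: powr_realpow power2_eq_square)
  then show "m \<le> k * k"
    by (simp only: of_nat_le_iff)
qed

lemma good_graphs_eq_diff:
  "good_graphs \<epsilon> \<epsilon>' c n =
     {E. E \<subseteq> {1..n div 2} \<times> {n div 2 + 1..n} \<and> card E = nat \<lfloor>real (n div 2) powr (2 - \<epsilon>)\<rfloor>}
     - {E. \<exists>S. S \<subseteq> {1..n} \<and> S \<noteq> {} \<and> real (card S) \<le> real (n div 2) powr \<epsilon>'
             \<and> (\<forall>v\<in>S. c \<le> real (bip_degree_in E S v))}"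
  unfolding good_graphs_def good_graph_def by (intro set_eqI) (simp add: not_le[symmetric], blast)

lemma card_graphs_with_dense_set_of_size_le:
  fixes \<delta> :: real and k s :: nat
  assumes "0 < \<delta>" "\<delta> < 1" "8 \<le> k" "1 \<le> s" "real s \<le> sqrt (real k)"
  defines "m \<equiv> nat \<lfloor>real k powr (2 - (1/2 + \<delta>/2))\<rfloor>"
  shows "real (card {E. E \<subseteq> {1..k} \<times> {k + 1..2 * k} \<and> card E = m \<and>
                    (\<exists>S\<subseteq>{1..2 * k}. card S = s \<and> (\<forall>v\<in>S. 8 / \<delta> \<le> real (bip_degree_in E S v)))})
           \<le> (2 / real k) ^ s * real ((k * k) choose m)"
proof -
  define U where "U = {1..k} \<times> {k + 1..2 * k}"
  define t where "t = nat \<lceil>8 / \<delta> * real s / 2\<rceil>"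
  have U: "finite U" "card U = k * k"
    unfolding U_def by (simp_all add: card_cartesian_product)
  have m: "m \<le> k * k" "real m \<le> real k powr (2 - (1/2 + \<delta>/2))"
    using edge_count_bounds[of \<delta> k] assms unfolding m_def by simp_all
  have "real (card {E. E \<subseteq> U \<and> card E = m \<and>
                    (\<exists>S\<subseteq>{1..2 * k}. card S = s \<and> (\<forall>v\<in>S. 8 / \<delta> \<le> real (bip_degree_in E S v)))})
          \<le> real ((2 * k) choose s) * real ((s * s) choose t)
              * ((real m / real (k * k)) ^ t * real ((k * k) choose m))"
    using card_graphs_with_dense_set_le[where V = "{1..2 * k}" and c = "8 / \<delta>" and U = U] U m
    unfolding t_def by simp
  also have "\<dots> \<le> (2 / real k) ^ s * real ((k * k) choose m)"
    using dense_set_count_factor_le[of \<delta> k s m] assms m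
    unfolding mult.assoc[symmetric] t_def by (intro mult_right_mono) auto
  finally show ?thesis
    unfolding U_def .
qed

lemma card_bad_graphs_le:
  fixes \<delta> :: real and k :: nat
  assumes "0 < \<delta>" "\<delta> < 1" "8 \<le> k"
  defines "m \<equiv> nat \<lfloor>real k powr (2 - (1/2 + \<delta>/2))\<rfloor>"
  shows "real (card {E. E \<subseteq> {1..k} \<times> {k + 1..2 * k} \<and> card E = m \<and>
                    (\<exists>S. S \<subseteq> {1..2 * k} \<and> S \<noteq> {} \<and> real (card S) \<le> real k powr (1/2)
                         \<and> (\<forall>v\<in>S. 8 / \<delta> \<le> real (bip_degree_in E S v)))})
           \<le> 1/3 * real ((k * k) choose m)"
    (is "real (card ?B) \<le> _")
proof -
  define U where "U = {1..k} \<times> {k + 1..2 * k}"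
  define Bad where "Bad s = {E. E \<subseteq> U \<and> card E = m \<and>
      (\<exists>S\<subseteq>{1..2 * k}. card S = s \<and> (\<forall>v\<in>S. 8 / \<delta> \<le> real (bip_degree_in E S v)))}" for s
  define r where "r = nat \<lfloor>sqrt (real k)\<rfloor>"
  have "?B \<subseteq> (\<Union>s\<in>{1..r}. Bad s)"
  proof
    fix E assume "E \<in> ?B"
    then obtain S where S: "S \<subseteq> {1..2 * k}" "S \<noteq> {}" "real (card S) \<le> sqrt (real k)"
      and E: "E \<subseteq> U" "card E = m" "\<forall>v\<in>S. 8 / \<delta> \<le> real (bip_degree_in E S v)"
      unfolding U_def by (auto simp: powr_half_sqrt)
    have "card S \<in> {1..r}"
      using S finite_subset[OF S(1)] unfolding r_def by (auto simp: Suc_le_eq card_gt_0_iff le_nat_floor)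
    then show "E \<in> (\<Union>s\<in>{1..r}. Bad s)"
      using S E unfolding Bad_def by blast
  qed
  moreover have "(\<Union>s\<in>{1..r}. Bad s) \<subseteq> Pow U"
    unfolding Bad_def by blast
  moreover have "finite U"
    unfolding U_def by simp
  ultimately have "card ?B \<le> card (\<Union>s\<in>{1..r}. Bad s)"
    by (meson card_mono finite_Pow_iff finite_subset)
  also have "\<dots> \<le> (\<Sum>s\<in>{1..r}. card (Bad s))"
    by (rule card_UN_le) simp
  finally have "real (card ?B) \<le> (\<Sum>s\<in>{1..r}. real (card (Bad s)))"
    by (simp only: of_nat_le_iff flip: of_nat_sum)
  also have "\<dots> \<le> (\<Sum>s\<in>{1..r}. (2 / real k) ^ s * real ((k * k) choose m))"
  proof (rule sum_mono)
    fix s assume s: "s \<in> {1..r}"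
    then have "real s \<le> real r"
      by simp
    also have "real r \<le> sqrt (real k)"
      unfolding r_def by simp
    finally have "real s \<le> sqrt (real k)" .
    then show "real (card (Bad s)) \<le> (2 / real k) ^ s * real ((k * k) choose m)"
      using card_graphs_with_dense_set_of_size_le[OF assms(1-3), of s] s unfolding Bad_def U_def m_def
      by simp
  qed
  also have "\<dots> = (\<Sum>s\<in>{1..r}. (2 / real k) ^ s) * real ((k * k) choose m)"
    by (simp add: sum_distrib_right)
  also have "\<dots> \<le> 1/3 * real ((k * k) choose m)"
    using assms by (intro mult_right_mono sum_power_atLeast1_le_one_third) auto
  finally show ?thesis .
qed

lemma card_good_graphs_ge:
  fixes \<delta> :: real and k :: nat
  assumes "0 < \<delta>" "\<delta> < 1" "8 \<le> k"
  defines "m \<equiv> nat \<lfloor>real k powr (2 - (1/2 + \<delta>/2))\<rfloor>"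
  shows "2/3 * real ((k * k) choose m) \<le> real (card (good_graphs (1/2 + \<delta>/2) (1/2) (8/\<delta>) (2 * k)))"
proof -
  define A where "A = {E. E \<subseteq> {1..k} \<times> {k + 1..2 * k} \<and> card E = m}"
  define B where "B = {E. E \<subseteq> {1..k} \<times> {k + 1..2 * k} \<and> card E = m \<and>
      (\<exists>S. S \<subseteq> {1..2 * k} \<and> S \<noteq> {} \<and> real (card S) \<le> real k powr (1/2)
           \<and> (\<forall>v\<in>S. 8 / \<delta> \<le> real (bip_degree_in E S v)))}"
  have "good_graphs (1/2 + \<delta>/2) (1/2) (8/\<delta>) (2 * k) = A - B"
    unfolding good_graphs_eq_diff A_def B_def m_def by auto
  moreover have "card (A - B) = card A - card B" "finite B" "B \<subseteq> A"
    unfolding A_def B_def by (auto intro: card_Diff_subset finite_subset[of _ "Pow ({1..k} \<times> {k + 1..2 * k})"])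
  moreover have "card A = (k * k) choose m"
    unfolding A_def by (simp add: n_subsets card_cartesian_product)
  moreover have "real (card B) \<le> 1/3 * real ((k * k) choose m)"
    unfolding B_def m_def using card_bad_graphs_le[OF assms(1-3)] .
  ultimately show ?thesis
    by (simp add: card_mono of_nat_diff)
qed

lemma exp_le_binomial_square:
  fixes k m :: nat
  assumes "0 < m" "real m \<le> real k powr (3/2)"
  shows "exp (real m * ln (real k) / 2) \<le> real ((k * k) choose m)"
proof -
  have k: "0 < k"
    using assms by (cases "k = 0") auto
  have "real m * sqrt (real k) \<le> real k powr (3/2) * sqrt (real k)"
    using assms by (intro mult_right_mono) auto
  also have "\<dots> = real (k * k)"
    using k by (simp add: powr_half_sqrt[symmetric] powr_add[symmetric] powr_realpow[of _ 2, simplified]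
        power2_eq_square)
  finally have m_sqrt: "real m * sqrt (real k) \<le> real (k * k)" .
  moreover have "1 \<le> sqrt (real k)"
    using k by simp
  ultimately have "real m \<le> real (k * k)"
    using mult_left_mono[of 1 "sqrt (real k)" "real m"] by simp
  then have "m \<le> k * k"
    by (simp only: of_nat_le_iff)
  have "exp (real m * ln (real k) / 2) = sqrt (real k) ^ m"
    using k by (simp add: powr_half_sqrt[symmetric] powr_def exp_of_nat_mult[symmetric] mult_ac)
  also have "\<dots> \<le> (real (k * k) / real m) ^ m"
    using m_sqrt assms by (intro power_mono) (auto simp: field_simps)
  also have "\<dots> \<le> real ((k * k) choose m)"
    using binomial_ge_n_over_k_pow_k[OF \<open>m \<le> k * k\<close>] by simp
  finally show ?thesis .
qed

lemma two_powr_le_exp_edge_count: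
  fixes a :: real and k m :: nat
  assumes "1 \<le> a" "a \<le> 2" "8 \<le> k" "real k powr a - 1 \<le> real m"
  shows "3/2 * 2 powr (1/32 * real (2 * k) powr a * ln (real (2 * k))) \<le> exp (real m * ln (real k) / 2)"
proof -
  define A where "A = real k powr a"
  define x where "x = 1/32 * real (2 * k) powr a * ln (real (2 * k))"
  have k: "real k \<ge> 8"
    using assms by simp
  have A: "real k \<le> A"
    unfolding A_def using powr_mono[of 1 a "real k"] assms by simp
  have ln_k: "1 \<le> ln (real k)"
    using exp_le k ln_ge_iff[of "real k" 1] by simp
  have power: "real (2 * k) powr a \<le> 4 * A"
    unfolding A_def using powr_mono[of a 2 2] assms by (simp add: powr_mult)
  have log: "ln (real (2 * k)) \<le> 2 * ln (real k)"
    using k ln_le_cancel_iff[of 2 "real k"] by (simp add: ln_mult)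
  have "x \<le> 1/32 * (4 * A) * (2 * ln (real k))"
    unfolding x_def
  proof (rule mult_mono)
    show "1/32 * real (2 * k) powr a \<le> 1/32 * (4 * A)"
      using power by simp
  qed (use log A k in auto)
  then have "x \<le> A * ln (real k) / 4"
    by simp
  moreover have "x * ln 2 \<le> x"
    unfolding x_def using k ln_2_less_1 by (intro mult_left_le) auto
  ultimately have "x * ln 2 + 1 \<le> A * ln (real k) / 4 + 1"
    by linarith
  also have "\<dots> \<le> (A - 1) * ln (real k) / 2"
  proof -
    have "(1/4 * A - 1/2) * 1 \<le> (1/4 * A - 1/2) * ln (real k)"
      using ln_k A k by (intro mult_left_mono) auto
    then show ?thesis
      using A k by (simp add: algebra_simps)
  qed
  also have "\<dots> \<le> real m * ln (real k) / 2"
    using assms ln_k unfolding A_def by (intro divide_right_mono mult_right_mono) auto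
  finally have "x * ln 2 + 1 \<le> real m * ln (real k) / 2" .
  moreover have "3/2 * 2 powr x \<le> exp (x * ln 2 + 1)"
    using exp_ge_add_one_self[of 1] by (simp add: powr_def exp_add)
  ultimately show ?thesis
    unfolding x_def by (meson exp_le_cancel_iff order_trans)
qed

theorem mainTheorem6:
  fixes \<delta> :: real
  assumes "0 < \<delta>" and "\<delta> < 1"
  shows "\<exists>C>0. \<exists>N::nat. \<forall>n\<ge>N. even n \<longrightarrow>
           2 powr (C * real n powr (2 - (1/2 + \<delta>/2)) * ln (real n))
             \<le> real (card (good_graphs (1/2 + \<delta>/2) (1/2) (8/\<delta>) n))"
proof (intro exI[of _ "1/32"] conjI exI[of _ "16::nat"] allI impI)
  fix n :: nat
  assume "16 \<le> n" "even n"
  then obtain k where n: "n = 2 * k" and k: "8 \<le> k"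
    by (auto elim: evenE)
  define a where "a = 2 - (1/2 + \<delta>/2)"
  define m where "m = nat \<lfloor>real k powr a\<rfloor>"
  have m: "real k powr a - 1 \<le> real m" "real m \<le> real k powr a" "real k - 1 \<le> real m"
    using edge_count_bounds[of \<delta> k] assms k unfolding m_def a_def by simp_all
  have "real k powr a \<le> real k powr (3/2)"
    unfolding a_def using assms k by (intro powr_mono) auto
  have "2 powr (1/32 * real n powr a * ln (real n)) \<le> 2/3 * exp (real m * ln (real k) / 2)"
    using two_powr_le_exp_edge_count[of a k m] m assms k unfolding n a_def by simp
  also have "\<dots> \<le> 2/3 * real ((k * k) choose m)"
    using exp_le_binomial_square[of m k] m k \<open>real k powr a \<le> real k powr (3/2)\<close> by simp
  also have "\<dots> \<le> real (card (good_graphs (1/2 + \<delta>/2) (1/2) (8/\<delta>) n))"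
    using card_good_graphs_ge[OF assms k] unfolding n m_def a_def .
  finally show "2 powr (1/32 * real n powr (2 - (1/2 + \<delta>/2)) * ln (real n))
      \<le> real (card (good_graphs (1/2 + \<delta>/2) (1/2) (8/\<delta>) n))"
    unfolding a_def .
qed (simp)

end
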